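(* Let $s\ge 1$, $m=\lfloor (s+1)/2\rfloor$, let $A=(a_{ij})$ be a real $s\times s$ matrix and $b\in\mathbb{R}^s$ with $b_i>0$ for all $i$, satisfying (i) $b_i a_{ij}+b_j a_{ji}-b_ib_j=0$ for $1\le i,j\le s$, and (ii) $b_{s+1-i}=b_i$ for $1\le i\le s$ and $b_j=a_{s+1-i,s+1-j}+a_{ij}$ for $1\le i,j\le s$. Let $B=\mathrm{diag}(b_1,\dots,b_s)$, $e_s=(1,\dots,1)^T\in\mathbb{R}^s$, and $\bar A=(\bar a_{ij})$ with $\bar a_{ij}=a_{ij}-b_j/2$. Let $P=(P_1\ P_2)$ be the orthogonal $s\times s$ matrix, with $P_1$ of size $s\times m$ and $P_2$ of size $s\times(s-m)$, such that for $x\in\mathbb{R}^s$, $P_1^Tx=(y_1,\dots,y_m)^T$ and $P_2^Tx=(y_{m+1},\dots,y_s)^T$, where $y_i=\tfrac{\sqrt2}{2}(x_{s+1-i}+x_i)$ for $1\le i\le\lfloor s/2\rfloor$, $y_m=x_m$ if $s$ is odd, and $y_i=\tfrac{\sqrt2}{2}(x_{s+1-i}-x_i)$ for $m+1\le i\le s$. Let $K=P_1^TB^{1/2}\bar AB^{-1/2}P_2\in\mathbb{R}^{m\times(s-m)}$ and let $K=UDV^T$ be a singular value decomposition, with $U\in\mathbb{R}^{m\times m}$, $V\in\mathbb{R}^{(s-m)\times(s-m)}$ orthogonal and $D\in\mathbb{R}^{m\times(s-m)}$ having diagonal entries $D_{ii}=\sigma_i\ge0$ ($1\le i\le s-m$)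 and zeros elsewhere; if $s$ is odd set $\sigma_m=0$. Let $Q_1=B^{-1/2}P_1U$, $Q_2=B^{-1/2}P_2V$, and $(\alpha_1,\dots,\alpha_m)^T=Q_1^TBe_s$. Let $h\in\mathbb{R}$, $J\in\mathbb{R}^{d\times d}$ and $r\in\mathbb{R}^{sd}$. Assume the matrices $I_d+h^2\sigma_i^2J^2$ ($1\le i\le m$) are invertible and that $$M=I_d-J\,\frac h2\sum_{i=1}^m\alpha_i^2\,(I_d+h^2\sigma_i^2J^2)^{-1}$$ is invertible. Define $R=(Q_1^TB\otimes I_d)\,r+h\,(DQ_2^TB\otimes J)\,r\in\mathbb{R}^{md}$ with blocks $R_1,\dots,R_m\in\mathbb{R}^d$; define $\Delta z\in\mathbb{R}^d$ as the solution of $M\,\Delta z=h\,J\sum_{i=1}^m\alpha_i(I_d+h^2\sigma_i^2J^2)^{-1}R_i$; define $W_i=(I_d+h^2\sigma_i^2J^2)^{-1}\big(R_i+\tfrac{\alpha_i}{2}\Delta z\big)$ for $1\le i\le m$ and $W'=(W_1^T,\dots,W_m^T)^T$; define $W''=-h\,(D^T\otimes J)\,W'+(Q_2^TB\otimes I_d)\,r\in\mathbb{R}^{(s-m)d}$; and set $\Delta Y=(Q_1\otimes I_d)W'+(Q_2\otimes I_d)W''$. Then $\Delta Y$ is the unique solution of the linear system $$\left(I_s\otimes I_d-h\,A\otimes J\right)\Delta Y=r .$$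
   Context: $A,b$ are the coefficients of an $s$-stage implicit Runge–Kutta scheme; condition (i) is symplecticity and (ii) is symmetry (e.g. Gauss collocation methods satisfy both). $\otimes$ denotes the Kronecker product, and $B^{\pm1/2}$ denote the diagonal matrices with entries $b_i^{\pm1/2}$. The system $(I_s\otimes I_d-hA\otimes J)\Delta Y=r$ is the simplified linear system arising in simplified Newton iterations for the stage equations. *)

theory Defs
  imports "Jordan_Normal_Form.Matrix"
begin

text \<open>Kronecker product of matrices (row-major block layout:
  block (i,j) of the result is A(i,j) times B).\<close>
definition kron :: "real mat \<Rightarrow> real mat \<Rightarrow> real mat" where
  "kron A B = mat (dim_row A * dim_row B) (dim_col A * dim_col B)
     (\<lambda>(i,j). A $$ (i div dim_row B, j div dim_col B) * B $$ (i mod dim_row B, j mod dim_col B))"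

text \<open>Inverse of a square matrix (meaningful when it is invertible).\<close>
definition minv :: "real mat \<Rightarrow> real mat" where
  "minv M = (SOME N. N \<in> carrier_mat (dim_row M) (dim_row M) \<and>
                      M * N = 1\<^sub>m (dim_row M) \<and> N * M = 1\<^sub>m (dim_row M))"

definition diagm :: "nat \<Rightarrow> (nat \<Rightarrow> real) \<Rightarrow> real mat" where
  "diagm n f = mat n n (\<lambda>(i,j). if i = j then f i else 0)"

text \<open>The transposed matrix P^T of the paper (0-based indices):
  (P^T x)_i = sqrt2/2 (x_(s-1-i) + x_i) for i < s div 2,
  (P^T x)_(m-1) = x_(m-1) if s is odd,
  (P^T x)_i = sqrt2/2 (x_(s-1-i) - x_i) for m \<le> i < s,  where m = (s+1) div 2.\<close>
definition PT_mat :: "nat \<Rightarrow> real mat" where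
  "PT_mat s = mat s s (\<lambda>(i,j).
     if i < s div 2 then sqrt 2 / 2 * ((if j = s - 1 - i then 1 else 0) + (if j = i then 1 else 0))
     else if i < (s + 1) div 2 then (if j = i then 1 else 0)
     else sqrt 2 / 2 * ((if j = s - 1 - i then 1 else 0) - (if j = i then 1 else 0)))"

definition P1_mat :: "nat \<Rightarrow> real mat" where
  "P1_mat s = mat s ((s + 1) div 2) (\<lambda>(i,j). transpose_mat (PT_mat s) $$ (i, j))"

definition P2_mat :: "nat \<Rightarrow> real mat" where
  "P2_mat s = mat s (s - (s + 1) div 2) (\<lambda>(i,j). transpose_mat (PT_mat s) $$ (i, j + (s + 1) div 2))"

definition msum :: "nat \<Rightarrow> nat \<Rightarrow> (nat \<Rightarrow> real mat) \<Rightarrow> nat set \<Rightarrow> real mat" where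
  "msum nr nc F I = mat nr nc (\<lambda>(k,l). \<Sum>i\<in>I. F i $$ (k,l))"

definition vsum :: "nat \<Rightarrow> (nat \<Rightarrow> real vec) \<Rightarrow> nat set \<Rightarrow> real vec" where
  "vsum n F I = vec n (\<lambda>k. \<Sum>i\<in>I. F i $ k)"

definition block_vec :: "nat \<Rightarrow> real vec \<Rightarrow> nat \<Rightarrow> real vec" where
  "block_vec d v i = vec d (\<lambda>k. v $ (i * d + k))"

definition stack_vec :: "nat \<Rightarrow> nat \<Rightarrow> (nat \<Rightarrow> real vec) \<Rightarrow> real vec" where
  "stack_vec m d W = vec (m * d) (\<lambda>p. W (p div d) $ (p mod d))"

end

theory Submission
  imports Defs "Jordan_Normal_Form.Determinant"
begin

(* With S = B^(1/2) Abar B^(-1/2), symplecticity makes S skew-symmetric and the symmetry of the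
   scheme makes it anti-invariant under the flip F (F S F = -S), while F P1 = P1 and F P2 = -P2.
   Hence P1^T S P1 = 0 and P2^T S P2 = 0, so the SVD of K = P1^T S P2 yields A Q2 = Q1 D and
   A Q1 = -Q2 D^T + Q1 alpha alpha^T / 2; the rank-one part A - Abar = e b^T / 2 is annihilated by
   Q2 because Q2^T b = 0.  Since Q1 Q1^T B + Q2 Q2^T B = I, writing Delta Y = (Q1 x I) W' + (Q2 x I) W''
   turns the system into an arrow-shaped block system for the blocks W_i, solved by eliminating
   the coupling vector Delta z through the Schur complement M.  Uniqueness follows because the
   square system is solvable for every right-hand side. *)

section \<open>Row-major reshaping and Kronecker products\<close>

definition reshape_mat :: "nat \<Rightarrow> nat \<Rightarrow> real vec \<Rightarrow> real mat" where
  "reshape_mat n d v = mat n d (\<lambda>(j,k). v $ (j * d + k))"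

definition flatten_mat :: "real mat \<Rightarrow> real vec" where
  "flatten_mat X = vec (dim_row X * dim_col X) (\<lambda>p. X $$ (p div dim_col X, p mod dim_col X))"

lemma reshape_mat_carrier [simp]: "reshape_mat n d v \<in> carrier_mat n d"
  by (simp add: reshape_mat_def)

lemma dim_flatten_mat [simp]: "dim_vec (flatten_mat X) = dim_row X * dim_col X"
  by (simp add: flatten_mat_def)

lemma index_flatten_mat:
  assumes "X \<in> carrier_mat n d" "i < n" "k < d"
  shows "flatten_mat X $ (i * d + k) = X $$ (i, k)"
proof -
  have "i * d + k < (i + 1) * d" using assms(3) by simp
  also have "\<dots> \<le> n * d" using assms(2) by (intro mult_le_mono1) simp
  finally have "i * d + k < n * d" .
  then show ?thesis using assms by (simp add: flatten_mat_def)
qed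

lemma div_mod_less_mult:
  assumes "p < n * (d :: nat)" shows "p div d < n" "p mod d < d"
proof -
  from assms have "d > 0" by (cases d) auto
  with assms show "p div d < n" "p mod d < d" by (simp_all add: less_mult_imp_div_less)
qed

lemma flatten_reshape_mat:
  assumes "v \<in> carrier_vec (n * d)" shows "flatten_mat (reshape_mat n d v) = v"
  using assms div_mod_less_mult by (intro eq_vecI) (auto simp: flatten_mat_def reshape_mat_def)

lemma reshape_flatten_mat:
  assumes "X \<in> carrier_mat n d" shows "reshape_mat n d (flatten_mat X) = X"
  using assms index_flatten_mat by (intro eq_matI) (auto simp: reshape_mat_def)

lemma flatten_mat_add:
  assumes "dim_row Y = dim_row X" "dim_col Y = dim_col X"
  shows "flatten_mat (X + Y) = flatten_mat X + flatten_mat Y"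
  using assms div_mod_less_mult by (intro eq_vecI) (auto simp: flatten_mat_def)

lemma flatten_mat_minus:
  assumes "dim_row Y = dim_row X" "dim_col Y = dim_col X"
  shows "flatten_mat (X - Y) = flatten_mat X - flatten_mat Y"
  using assms div_mod_less_mult by (intro eq_vecI) (auto simp: flatten_mat_def)

lemma flatten_mat_smult: "flatten_mat (a \<cdot>\<^sub>m X) = a \<cdot>\<^sub>v flatten_mat X"
  using div_mod_less_mult by (intro eq_vecI) (auto simp: flatten_mat_def)

lemma sum_mult_split:
  "(\<Sum>q<n * d. f q) = (\<Sum>j<n. \<Sum>l<d. f (j * d + l :: nat))"
proof (induction n)
  case (Suc n)
  have "(\<Sum>q<Suc n * d. f q) = (\<Sum>q<n * d. f q) + (\<Sum>q\<in>{n * d..<n * d + d}. f q)"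
    by (simp add: lessThan_atLeast0 add.commute sum.atLeastLessThan_concat)
  also have "(\<Sum>q\<in>{n * d..<n * d + d}. f q) = (\<Sum>l<d. f (n * d + l))"
    using sum.shift_bounds_nat_ivl[of f 0 "n * d" d] by (simp add: lessThan_atLeast0 add.commute)
  finally show ?case using Suc by simp
qed simp

lemma dim_kron [simp]:
  "dim_row (kron A B) = dim_row A * dim_row B" "dim_col (kron A B) = dim_col A * dim_col B"
  by (simp_all add: kron_def)

lemma kron_mult_vec:
  assumes X: "X \<in> carrier_mat n' n" and Y: "Y \<in> carrier_mat d' d" and v: "v \<in> carrier_vec (n * d)"
  shows "kron X Y *\<^sub>v v = flatten_mat (X * reshape_mat n d v * transpose_mat Y)"
proof (rule eq_vecI)
  show "dim_vec (kron X Y *\<^sub>v v) = dim_vec (flatten_mat (X * reshape_mat n d v * transpose_mat Y))"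
    using X Y by (simp add: kron_def)
  fix p assume "p < dim_vec (flatten_mat (X * reshape_mat n d v * transpose_mat Y))"
  then have p: "p < n' * d'" using X Y by simp
  note pdm = div_mod_less_mult[OF p]
  have "(kron X Y *\<^sub>v v) $ p = (\<Sum>q<n * d. X $$ (p div d', q div d) * Y $$ (p mod d', q mod d) * v $ q)"
    using X Y v p by (simp add: kron_def mult_mat_vec_def scalar_prod_def lessThan_atLeast0)
  also have "\<dots> = (\<Sum>j<n. \<Sum>l<d. X $$ (p div d', j) * Y $$ (p mod d', l) * v $ (j * d + l))"
    unfolding sum_mult_split by (intro sum.cong refl) simp
  also have "\<dots> = (X * reshape_mat n d v * transpose_mat Y) $$ (p div d', p mod d')"
    using X Y pdm
    by (simp add: reshape_mat_def times_mat_def scalar_prod_def sum_distrib_left sum_distrib_right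
        lessThan_atLeast0 mult.assoc mult.left_commute)
      (subst sum.swap, simp add: mult.commute mult.left_commute)
  finally show "(kron X Y *\<^sub>v v) $ p = flatten_mat (X * reshape_mat n d v * transpose_mat Y) $ p"
    using X Y p by (simp add: flatten_mat_def)
qed

lemma kron_mult_flatten_mat:
  assumes "dim_col X = dim_row Z" "dim_col Y = dim_col Z"
  shows "kron X Y *\<^sub>v flatten_mat Z = flatten_mat (X * Z * transpose_mat Y)"
proof -
  have "kron X Y *\<^sub>v flatten_mat Z
      = flatten_mat (X * reshape_mat (dim_row Z) (dim_col Z) (flatten_mat Z) * transpose_mat Y)"
    using assms by (intro kron_mult_vec) (auto intro!: carrier_matI carrier_vecI)
  then show ?thesis by (simp add: reshape_flatten_mat[OF carrier_matI[OF refl refl]])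
qed

lemma stack_vec_eq_flatten_mat: "stack_vec m d W = flatten_mat (mat m d (\<lambda>(j,k). W j $ k))"
  using div_mod_less_mult by (intro eq_vecI) (auto simp: stack_vec_def flatten_mat_def)

lemma block_vec_flatten_mat:
  assumes "X \<in> carrier_mat m d"
  shows "mat m d (\<lambda>(i,k). block_vec d (flatten_mat X) i $ k) = X"
  using assms index_flatten_mat by (intro eq_matI) (auto simp: block_vec_def)

lemma assoc_mult_mat_dim:
  "dim_col (A :: 'a :: semiring_0 mat) = dim_row B \<Longrightarrow> dim_col B = dim_row C \<Longrightarrow> A * B * C = A * (B * C)"
  by (rule assoc_mult_mat[of A "dim_row A" "dim_col A" B "dim_col B" C "dim_col C"]) auto

lemma mult_add_distrib_mat_dim:
  "dim_col (A :: 'a :: semiring_0 mat) = dim_row B \<Longrightarrow> dim_row C = dim_row B \<Longrightarrow> dim_col C = dim_col B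
    \<Longrightarrow> A * (B + C) = A * B + A * C"
  by (rule mult_add_distrib_mat[of A "dim_row A" "dim_col A" B "dim_col B"]) auto

lemma add_mult_distrib_mat_dim:
  "dim_col (A :: 'a :: semiring_0 mat) = dim_row C \<Longrightarrow> dim_row B = dim_row A \<Longrightarrow> dim_col B = dim_col A
    \<Longrightarrow> (A + B) * C = A * C + B * C"
  by (rule add_mult_distrib_mat[of A "dim_row A" "dim_col A" B C "dim_col C"]) auto

lemma mult_smult_distrib_dim:
  "dim_col (A :: 'a :: comm_semiring_0 mat) = dim_row B \<Longrightarrow> A * (k \<cdot>\<^sub>m B) = k \<cdot>\<^sub>m (A * B)"
  by (rule mult_smult_distrib[of A "dim_row A" "dim_col A" B "dim_col B"]) auto

lemma mult_smult_assoc_mat_dim: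
  "dim_col (A :: 'a :: comm_semiring_0 mat) = dim_row B \<Longrightarrow> (k \<cdot>\<^sub>m A) * B = k \<cdot>\<^sub>m (A * B)"
  by (rule mult_smult_assoc_mat[of A "dim_row A" "dim_col A" B "dim_col B"]) auto

lemma transpose_mult_dim:
  "dim_col (A :: 'a :: comm_semiring_0 mat) = dim_row B \<Longrightarrow> transpose_mat (A * B) = transpose_mat B * transpose_mat A"
  by (rule transpose_mult[of A "dim_row A" "dim_col A" B "dim_col B"]) auto

lemmas mat_algebra_dim = assoc_mult_mat_dim mult_add_distrib_mat_dim add_mult_distrib_mat_dim
  mult_smult_distrib_dim mult_smult_assoc_mat_dim transpose_mult_dim

lemma assoc_mult_mat_vec_dim:
  "dim_col (A :: 'a :: comm_semiring_0 mat) = dim_row B \<Longrightarrow> dim_vec v = dim_col B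
    \<Longrightarrow> (A * B) *\<^sub>v v = A *\<^sub>v (B *\<^sub>v v)"
  by (rule assoc_mult_mat_vec[of A "dim_row A" "dim_col A" B "dim_col B"]) (auto intro!: carrier_vecI carrier_matI)

lemma add_mult_distrib_mat_vec_dim:
  "dim_row (B :: 'a :: semiring_0 mat) = dim_row A \<Longrightarrow> dim_col B = dim_col A \<Longrightarrow> dim_vec v = dim_col A
    \<Longrightarrow> (A + B) *\<^sub>v v = A *\<^sub>v v + B *\<^sub>v v"
  by (rule add_mult_distrib_mat_vec[of A "dim_row A" "dim_col A"]) (auto intro!: carrier_vecI carrier_matI)

lemma minus_mult_distrib_mat_vec_dim:
  "dim_row (B :: 'a :: ring mat) = dim_row A \<Longrightarrow> dim_col B = dim_col A \<Longrightarrow> dim_vec v = dim_col A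
    \<Longrightarrow> (A - B) *\<^sub>v v = A *\<^sub>v v - B *\<^sub>v v"
  by (rule minus_mult_distrib_mat_vec[of A "dim_row A" "dim_col A"]) (auto intro!: carrier_vecI carrier_matI)

lemma mult_add_distrib_mat_vec_dim:
  "dim_vec v = dim_col (A :: 'a :: semiring_0 mat) \<Longrightarrow> dim_vec w = dim_col A
    \<Longrightarrow> A *\<^sub>v (v + w) = A *\<^sub>v v + A *\<^sub>v w"
  by (rule mult_add_distrib_mat_vec[of A "dim_row A" "dim_col A"]) (auto intro!: carrier_vecI carrier_matI)

lemma mult_mat_vec_smult_dim:
  "dim_vec v = dim_col (A :: 'a :: field mat) \<Longrightarrow> A *\<^sub>v (c \<cdot>\<^sub>v v) = c \<cdot>\<^sub>v (A *\<^sub>v v)"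
  by (rule mult_mat_vec[of A "dim_row A" "dim_col A"]) (auto intro!: carrier_vecI carrier_matI)

lemma smult_mat_mult_vec_dim:
  "dim_vec v = dim_col A \<Longrightarrow> (c \<cdot>\<^sub>m (A :: 'a :: comm_semiring_0 mat)) *\<^sub>v v = c \<cdot>\<^sub>v (A *\<^sub>v v)"
  by (rule eq_vecI) (auto simp: scalar_prod_def sum_distrib_left mult.assoc)

lemmas mat_vec_algebra_dim = assoc_mult_mat_vec_dim add_mult_distrib_mat_vec_dim
  minus_mult_distrib_mat_vec_dim mult_add_distrib_mat_vec_dim mult_mat_vec_smult_dim smult_mat_mult_vec_dim

lemma one_mult_mat_vec_dim [simp]: "dim_vec (v :: 'a :: semiring_1 vec) = n \<Longrightarrow> 1\<^sub>m n *\<^sub>v v = v"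
  by (rule one_mult_mat_vec) auto

lemma add_zero_mat_dim [simp]:
  "dim_row (A :: 'a :: monoid_add mat) = n \<Longrightarrow> dim_col A = k \<Longrightarrow> A + 0\<^sub>m n k = A"
  "dim_row (A :: 'a :: monoid_add mat) = n \<Longrightarrow> dim_col A = k \<Longrightarrow> 0\<^sub>m n k + A = A"
  by (auto intro!: eq_matI)

lemma add_zero_vec_dim [simp]: "dim_vec (v :: 'a :: monoid_add vec) = n \<Longrightarrow> v + 0\<^sub>v n = v"
  by (rule eq_vecI) auto

lemma mult_zero_vec_dim [simp]: "dim_col (A :: 'a :: semiring_0 mat) = n \<Longrightarrow> A *\<^sub>v 0\<^sub>v n = 0\<^sub>v (dim_row A)"
  by (rule eq_vecI) (simp_all add: scalar_prod_def)

lemma eq_zero_mat_if_eq_uminus: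
  assumes "X \<in> carrier_mat n k" "X = - (X :: real mat)" shows "X = 0\<^sub>m n k"
proof (rule eq_matI)
  fix i j assume ij: "i < dim_row (0\<^sub>m n k)" "j < dim_col (0\<^sub>m n k)"
  have "X $$ (i,j) = (- X) $$ (i,j)" using arg_cong[OF assms(2), of "\<lambda>Y. Y $$ (i,j)"] by simp
  also have "\<dots> = - X $$ (i,j)" using assms(1) ij by simp
  finally show "X $$ (i,j) = 0\<^sub>m n k $$ (i,j)" using ij by simp
qed (use assms in auto)

lemma minv_inverse:
  assumes "invertible_mat X" "X \<in> carrier_mat n n"
  shows "minv X \<in> carrier_mat n n" "X * minv X = 1\<^sub>m n" "minv X * X = 1\<^sub>m n"
proof -
  obtain Y where Y: "inverts_mat X Y" "inverts_mat Y X"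
    using assms(1) unfolding invertible_mat_def by blast
  then have XY: "X * Y = 1\<^sub>m n" and YX: "Y * X = 1\<^sub>m (dim_row Y)"
    using assms(2) unfolding inverts_mat_def by auto
  have "dim_col Y = n" by (metis XY index_mult_mat(3) index_one_mat(3))
  moreover have "dim_row Y = n" by (metis YX assms(2) carrier_matD(2) index_mult_mat(3) index_one_mat(3))
  ultimately have "\<exists>N. N \<in> carrier_mat (dim_row X) (dim_row X) \<and> X * N = 1\<^sub>m (dim_row X) \<and> N * X = 1\<^sub>m (dim_row X)"
    using XY YX assms(2) by auto
  from someI_ex[OF this] show "minv X \<in> carrier_mat n n" "X * minv X = 1\<^sub>m n" "minv X * X = 1\<^sub>m n"
    using assms(2) unfolding minv_def by auto
qed

lemma square_mat_surj_imp_inj: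
  fixes T :: "real mat"
  assumes T: "T \<in> carrier_mat n n" and surj: "\<And>y. y \<in> carrier_vec n \<Longrightarrow> \<exists>x \<in> carrier_vec n. T *\<^sub>v x = y"
    and x: "x \<in> carrier_vec n" "x' \<in> carrier_vec n" and eq: "T *\<^sub>v x = T *\<^sub>v x'"
  shows "x = x'"
proof -
  define pre where "pre j = (SOME x. x \<in> carrier_vec n \<and> T *\<^sub>v x = unit_vec n j)" for j
  have pre: "pre j \<in> carrier_vec n" "T *\<^sub>v pre j = unit_vec n j" for j
    using someI_ex[of "\<lambda>x. x \<in> carrier_vec n \<and> T *\<^sub>v x = unit_vec n j"] surj[of "unit_vec n j"]
    unfolding pre_def by auto
  define X where "X = mat n n (\<lambda>(i,j). pre j $ i)"
  have X: "X \<in> carrier_mat n n" by (simp add: X_def)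
  have col: "col X j = pre j" if "j < n" for j
    using that carrier_vecD[OF pre(1)] by (intro eq_vecI) (auto simp: X_def)
  have "T * X = 1\<^sub>m n"
  proof (rule eq_matI)
    fix i j assume ij: "i < dim_row (1\<^sub>m n)" "j < dim_col (1\<^sub>m n)"
    then have "(T * X) $$ (i,j) = (T *\<^sub>v col X j) $ i" using T X by simp
    also have "\<dots> = 1\<^sub>m n $$ (i,j)" using ij col pre(2) by simp
    finally show "(T * X) $$ (i,j) = 1\<^sub>m n $$ (i,j)" .
  qed (use T X in auto)
  then have XT: "X * T = 1\<^sub>m n" by (rule mat_mult_left_right_inverse[OF T X])
  have "x = X *\<^sub>v (T *\<^sub>v x)" "x' = X *\<^sub>v (T *\<^sub>v x')"
    using assoc_mult_mat_vec[OF X T x(1)] assoc_mult_mat_vec[OF X T x(2)] XT x by simp_all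
  then show ?thesis using eq by simp
qed

lemma dim_diagm [simp]: "dim_row (diagm n f) = n" "dim_col (diagm n f) = n"
  by (simp_all add: diagm_def)

lemma diagm_eq_mat_diag: "diagm n f = mat_diag n f"
  by (rule eq_matI) (auto simp: diagm_def mat_diag_def)

lemma index_diagm_mult:
  "X \<in> carrier_mat n k \<Longrightarrow> i < n \<Longrightarrow> j < k \<Longrightarrow> (diagm n f * X) $$ (i,j) = f i * X $$ (i,j)"
  by (simp add: diagm_eq_mat_diag mat_diag_mult_left)

lemma index_mult_diagm:
  "X \<in> carrier_mat k n \<Longrightarrow> i < k \<Longrightarrow> j < n \<Longrightarrow> (X * diagm n f) $$ (i,j) = X $$ (i,j) * f j"
  by (simp add: diagm_eq_mat_diag mat_diag_mult_right)

lemma index_diagm_mult_vec: "v \<in> carrier_vec n \<Longrightarrow> i < n \<Longrightarrow> (diagm n f *\<^sub>v v) $ i = f i * v $ i"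
  by (simp add: diagm_def mult_mat_vec_def scalar_prod_def row_def if_distrib[of "\<lambda>x. x * _"] sum.delta
      cong: if_cong)

lemma transpose_diagm [simp]: "transpose_mat (diagm n f) = diagm n f"
  by (rule eq_matI) (auto simp: diagm_def)

lemma diagm_mult_diagm: "diagm n f * diagm n g = diagm n (\<lambda>i. f i * g i)"
  by (simp add: diagm_eq_mat_diag)

lemma diagm_eq_one_mat: "(\<And>i. i < n \<Longrightarrow> f i = 1) \<Longrightarrow> diagm n f = 1\<^sub>m n"
  by (rule eq_matI) (auto simp: diagm_def)

section \<open>The orthogonal matrix P\<close>

definition pt_anti :: "nat \<Rightarrow> nat \<Rightarrow> real" where
  "pt_anti s i = (if i < s div 2 then sqrt 2 / 2 else if i < (s + 1) div 2 then 0 else sqrt 2 / 2)"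

definition pt_diag :: "nat \<Rightarrow> nat \<Rightarrow> real" where
  "pt_diag s i = (if i < s div 2 then sqrt 2 / 2 else if i < (s + 1) div 2 then 1 else - (sqrt 2 / 2))"

lemma index_PT_mat:
  "i < s \<Longrightarrow> k < s \<Longrightarrow>
    PT_mat s $$ (i,k) = pt_anti s i * (if k = s - 1 - i then 1 else 0) + pt_diag s i * (if k = i then 1 else 0)"
  by (auto simp: PT_mat_def pt_anti_def pt_diag_def)

lemma dim_PT_mat [simp]: "dim_row (PT_mat s) = s" "dim_col (PT_mat s) = s"
  by (simp_all add: PT_mat_def)

lemma sum_two_deltas_mult:
  assumes "a < n" "b < n" "a' < n" "b' < n"
  shows "(\<Sum>k\<in>{0..<n::nat}. (x * (if k = a then 1 else 0) + y * (if k = b then 1 else 0)) *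
                  (x' * (if k = a' then 1 else 0) + y' * (if k = b' then 1 else 0)) :: real) =
     x * x' * (if a = a' then 1 else 0) + x * y' * (if a = b' then 1 else 0)
     + y * x' * (if b = a' then 1 else 0) + y * y' * (if b = b' then 1 else 0)"
proof -
  have "(\<Sum>k\<in>{0..<n::nat}. (x * (if k = a then 1 else 0) + y * (if k = b then 1 else 0)) *
                  (x' * (if k = a' then 1 else 0) + y' * (if k = b' then 1 else 0)) :: real) =
     (\<Sum>k\<in>{0..<n::nat}. (if k = a then x * x' * (if a = a' then 1 else 0) else 0)
        + (if k = a then x * y' * (if a = b' then 1 else 0) else 0)
        + (if k = b then y * x' * (if b = a' then 1 else 0) else 0)
        + (if k = b then y * y' * (if b = b' then 1 else 0) else 0))"
    by (intro sum.cong refl) (auto simp: algebra_simps)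
  also have "\<dots> = x * x' * (if a = a' then 1 else 0) + x * y' * (if a = b' then 1 else 0)
     + y * x' * (if b = a' then 1 else 0) + y * y' * (if b = b' then 1 else 0)"
    using assms by (simp add: sum.distrib sum.delta sum.delta')
  finally show ?thesis .
qed

lemma PT_mat_mult_transpose: "PT_mat s * transpose_mat (PT_mat s) = 1\<^sub>m s"
proof (rule eq_matI)
  fix i j assume "i < dim_row (1\<^sub>m s)" "j < dim_col (1\<^sub>m s)"
  then have ij: "i < s" "j < s" by auto
  have half: "sqrt 2 / 2 * (sqrt 2 / 2) = (1 / 2 :: real)" by (simp add: field_simps)
  have "(PT_mat s * transpose_mat (PT_mat s)) $$ (i,j) = (\<Sum>k\<in>{0..<s}. PT_mat s $$ (i,k) * PT_mat s $$ (j,k))"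
    using ij by (simp add: times_mat_def scalar_prod_def)
  also have "\<dots> = (\<Sum>k\<in>{0..<s}. (pt_anti s i * (if k = s - 1 - i then 1 else 0) + pt_diag s i * (if k = i then 1 else 0)) *
                       (pt_anti s j * (if k = s - 1 - j then 1 else 0) + pt_diag s j * (if k = j then 1 else 0)))"
    using ij by (intro sum.cong refl) (simp add: index_PT_mat)
  also have "\<dots> = pt_anti s i * pt_anti s j * (if s - 1 - i = s - 1 - j then 1 else 0)
     + pt_anti s i * pt_diag s j * (if s - 1 - i = j then 1 else 0)
     + pt_diag s i * pt_anti s j * (if i = s - 1 - j then 1 else 0)
     + pt_diag s i * pt_diag s j * (if i = j then 1 else 0)"
    using ij by (intro sum_two_deltas_mult) auto
  also have "\<dots> = 1\<^sub>m s $$ (i,j)"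
  proof (cases "i = j")
    case True
    then show ?thesis using ij by (auto simp: pt_anti_def pt_diag_def half)
  next
    case False
    show ?thesis
    proof (cases "j = s - 1 - i")
      case True
      then show ?thesis using ij False by (auto simp: pt_anti_def pt_diag_def half)
    next
      case False
      then have "i \<noteq> s - 1 - j" using ij by auto
      then show ?thesis using ij \<open>i \<noteq> j\<close> False by (auto simp: pt_anti_def pt_diag_def)
    qed
  qed
  finally show "(PT_mat s * transpose_mat (PT_mat s)) $$ (i,j) = 1\<^sub>m s $$ (i,j)" .
qed auto

lemma transpose_PT_mat_mult: "transpose_mat (PT_mat s) * PT_mat s = 1\<^sub>m s"
  by (rule mat_mult_left_right_inverse[OF _ _ PT_mat_mult_transpose]) auto

lemma P1_mat_carrier [simp]: "P1_mat s \<in> carrier_mat s ((s + 1) div 2)"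
  by (simp add: P1_mat_def)

lemma dim_P1_mat [simp]: "dim_row (P1_mat s) = s" "dim_col (P1_mat s) = (s + 1) div 2"
  by (simp_all add: P1_mat_def)

lemma P2_mat_carrier [simp]: "P2_mat s \<in> carrier_mat s (s - (s + 1) div 2)"
  by (simp add: P2_mat_def)

lemma dim_P2_mat [simp]: "dim_row (P2_mat s) = s" "dim_col (P2_mat s) = s - (s + 1) div 2"
  by (simp_all add: P2_mat_def)

lemma index_P1_mat: "i < s \<Longrightarrow> j < (s + 1) div 2 \<Longrightarrow> P1_mat s $$ (i,j) = PT_mat s $$ (j,i)"
  by (simp add: P1_mat_def)

lemma index_P2_mat:
  "i < s \<Longrightarrow> j < s - (s + 1) div 2 \<Longrightarrow> P2_mat s $$ (i,j) = PT_mat s $$ (j + (s + 1) div 2, i)"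
  by (simp add: P2_mat_def)

lemma P1_P2_completeness:
  "P1_mat s * transpose_mat (P1_mat s) + P2_mat s * transpose_mat (P2_mat s) = 1\<^sub>m s"
proof (rule eq_matI)
  fix i j assume "i < dim_row (1\<^sub>m s)" "j < dim_col (1\<^sub>m s)"
  then have ij: "i < s" "j < s" by auto
  let ?m = "(s + 1) div 2"
  let ?f = "\<lambda>k. PT_mat s $$ (k,i) * PT_mat s $$ (k,j)"
  have "(P1_mat s * transpose_mat (P1_mat s) + P2_mat s * transpose_mat (P2_mat s)) $$ (i,j)
     = (\<Sum>k\<in>{0..<?m}. ?f k) + (\<Sum>k\<in>{0..<s - ?m}. ?f (k + ?m))"
    using ij by (simp add: times_mat_def scalar_prod_def index_P1_mat index_P2_mat)
  also have "(\<Sum>k\<in>{0..<s - ?m}. ?f (k + ?m)) = (\<Sum>k\<in>{?m..<s}. ?f k)"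
    using sum.shift_bounds_nat_ivl[of ?f 0 ?m "s - ?m"] by simp
  also have "(\<Sum>k\<in>{0..<?m}. ?f k) + (\<Sum>k\<in>{?m..<s}. ?f k) = (\<Sum>k\<in>{0..<s}. ?f k)"
    by (rule sum.atLeastLessThan_concat) auto
  also have "\<dots> = (transpose_mat (PT_mat s) * PT_mat s) $$ (i,j)"
    using ij by (simp add: times_mat_def scalar_prod_def)
  finally show "(P1_mat s * transpose_mat (P1_mat s) + P2_mat s * transpose_mat (P2_mat s)) $$ (i,j) = 1\<^sub>m s $$ (i,j)"
    by (simp add: transpose_PT_mat_mult)
qed auto

lemma P2_mat_transpose_mult_palindrome:
  assumes x: "x \<in> carrier_vec s" and pal: "\<forall>k<s. x $ (s - 1 - k) = x $ k"
  shows "transpose_mat (P2_mat s) *\<^sub>v x = 0\<^sub>v (s - (s + 1) div 2)"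
proof (rule eq_vecI)
  let ?m = "(s + 1) div 2"
  fix j assume "j < dim_vec (0\<^sub>v (s - ?m))"
  then have j: "j + ?m < s" by simp
  have "(transpose_mat (P2_mat s) *\<^sub>v x) $ j = (\<Sum>k\<in>{0..<s}. PT_mat s $$ (j + ?m, k) * x $ k)"
    using j x by (simp add: mult_mat_vec_def scalar_prod_def index_P2_mat)
  also have "\<dots> = (\<Sum>k\<in>{0..<s}. (if k = s - 1 - (j + ?m) then pt_anti s (j + ?m) * x $ k else 0)
      + (if k = j + ?m then pt_diag s (j + ?m) * x $ k else 0))"
    using j by (intro sum.cong) (auto simp: index_PT_mat)
  also have "\<dots> = pt_anti s (j + ?m) * x $ (s - 1 - (j + ?m)) + pt_diag s (j + ?m) * x $ (j + ?m)"
    using j by (simp add: sum.distrib)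
  also have "\<dots> = 0" using pal j by (simp add: pt_anti_def pt_diag_def)
  finally show "(transpose_mat (P2_mat s) *\<^sub>v x) $ j = 0\<^sub>v (s - ?m) $ j" using j by simp
qed (use x in auto)

definition flip_mat :: "nat \<Rightarrow> real mat" where
  "flip_mat s = mat s s (\<lambda>(i,j). if j = s - 1 - i then 1 else 0)"

lemma dim_flip_mat [simp]: "dim_row (flip_mat s) = s" "dim_col (flip_mat s) = s"
  by (simp_all add: flip_mat_def)

lemma transpose_flip_mat [simp]: "transpose_mat (flip_mat s) = flip_mat s"
  by (rule eq_matI) (auto simp: flip_mat_def)

lemma index_flip_mat_mult:
  assumes "X \<in> carrier_mat s k" "i < s" "j < k"
  shows "(flip_mat s * X) $$ (i,j) = X $$ (s - 1 - i, j)"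
proof -
  have "(flip_mat s * X) $$ (i,j) = (\<Sum>l\<in>{0..<s}. (if l = s - 1 - i then 1 else 0) * X $$ (l,j))"
    using assms by (simp add: times_mat_def scalar_prod_def flip_mat_def)
  also have "\<dots> = (\<Sum>l\<in>{0..<s}. if s - 1 - i = l then X $$ (l,j) else 0)"
    using assms by (intro sum.cong) auto
  finally show ?thesis using assms by (simp add: sum.delta)
qed

lemma index_mult_flip_mat:
  assumes "X \<in> carrier_mat k s" "i < k" "j < s"
  shows "(X * flip_mat s) $$ (i,j) = X $$ (i, s - 1 - j)"
proof -
  have "(X * flip_mat s) $$ (i,j) = (\<Sum>l\<in>{0..<s}. X $$ (i,l) * (if j = s - 1 - l then 1 else 0))"
    using assms by (simp add: times_mat_def scalar_prod_def flip_mat_def)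
  also have "\<dots> = (\<Sum>l\<in>{0..<s}. if s - 1 - j = l then X $$ (i,l) else 0)"
    using assms by (intro sum.cong) auto
  finally show ?thesis using assms by (simp add: sum.delta)
qed

lemma flip_mat_mult_P1_mat: "flip_mat s * P1_mat s = P1_mat s"
proof (rule eq_matI)
  fix i j assume "i < dim_row (P1_mat s)" "j < dim_col (P1_mat s)"
  then have ij: "i < s" "j < (s + 1) div 2" by auto
  then have "(flip_mat s * P1_mat s) $$ (i,j) = PT_mat s $$ (j, s - 1 - i)"
    using index_flip_mat_mult[OF P1_mat_carrier ij] by (simp add: index_P1_mat)
  also have "\<dots> = PT_mat s $$ (j, i)"
  proof (cases "j < s div 2")
    case True
    then have "pt_anti s j = pt_diag s j" by (simp add: pt_anti_def pt_diag_def)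
    then show ?thesis using ij by (auto simp: index_PT_mat)
  next
    case False
    then have "s - 1 - j = j" using ij by linarith
    then show ?thesis using ij by (auto simp: index_PT_mat)
  qed
  finally show "(flip_mat s * P1_mat s) $$ (i,j) = P1_mat s $$ (i,j)" using ij by (simp add: index_P1_mat)
qed auto

lemma flip_mat_mult_P2_mat: "flip_mat s * P2_mat s = - P2_mat s"
proof (rule eq_matI)
  let ?m = "(s + 1) div 2"
  fix i j assume "i < dim_row (- P2_mat s)" "j < dim_col (- P2_mat s)"
  then have ij: "i < s" "j < s - ?m" by auto
  then have "(flip_mat s * P2_mat s) $$ (i,j) = PT_mat s $$ (j + ?m, s - 1 - i)"
    using index_flip_mat_mult[OF P2_mat_carrier ij] by (simp add: index_P2_mat)
  also have "\<dots> = - PT_mat s $$ (j + ?m, i)"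
  proof -
    have e: "(s - 1 - i = s - 1 - (j + ?m)) = (i = j + ?m)" "(s - 1 - i = j + ?m) = (i = s - 1 - (j + ?m))"
      using ij by auto
    have c: "pt_anti s (j + ?m) = sqrt 2 / 2" "pt_diag s (j + ?m) = - (sqrt 2 / 2)"
      by (simp_all add: pt_anti_def pt_diag_def)
    show ?thesis using ij by (simp only: index_PT_mat e c; simp add: algebra_simps)
  qed
  finally show "(flip_mat s * P2_mat s) $$ (i,j) = (- P2_mat s) $$ (i,j)" using ij by (simp add: index_P2_mat)
qed auto

section \<open>Symmetric symplectic Runge--Kutta coefficients\<close>

locale symmetric_symplectic_rk =
  fixes s :: nat and A :: "real mat" and b :: "real vec"
  assumes A_carrier: "A \<in> carrier_mat s s" and b_carrier: "b \<in> carrier_vec s"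
    and b_pos: "\<forall>i<s. b $ i > 0"
    and symplectic: "\<forall>i<s. \<forall>j<s. b $ i * A $$ (i,j) + b $ j * A $$ (j,i) - b $ i * b $ j = 0"
    and symmetric_b: "\<forall>i<s. b $ (s - 1 - i) = b $ i"
    and symmetric_A: "\<forall>i<s. \<forall>j<s. b $ j = A $$ (s - 1 - i, s - 1 - j) + A $$ (i,j)"
begin

abbreviation "m \<equiv> (s + 1) div 2"
abbreviation "Bm \<equiv> diagm s (\<lambda>i. b $ i)"
abbreviation "Bh \<equiv> diagm s (\<lambda>i. sqrt (b $ i))"
abbreviation "Bmh \<equiv> diagm s (\<lambda>i. 1 / sqrt (b $ i))"
abbreviation "Abar \<equiv> mat s s (\<lambda>(i,j). A $$ (i,j) - b $ j / 2)"
abbreviation "P1 \<equiv> P1_mat s"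
abbreviation "P2 \<equiv> P2_mat s"

definition scaled_Abar :: "real mat" where "scaled_Abar = Bh * Abar * Bmh"

lemma dim_A [simp]: "dim_row A = s" "dim_col A = s" and dim_b [simp]: "dim_vec b = s"
  using A_carrier b_carrier by auto

lemma scaled_Abar_carrier [simp]: "scaled_Abar \<in> carrier_mat s s"
  and dim_scaled_Abar [simp]: "dim_row scaled_Abar = s" "dim_col scaled_Abar = s"
  by (simp_all add: scaled_Abar_def carrier_matI)

lemma sqrt_b_pos: "i < s \<Longrightarrow> sqrt (b $ i) > 0"
  using b_pos by simp

lemma Bh_mult_Bmh: "Bh * Bmh = 1\<^sub>m s" and Bmh_mult_Bh: "Bmh * Bh = 1\<^sub>m s"
  using b_pos by (auto simp: diagm_mult_diagm intro!: diagm_eq_one_mat)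

lemma Bmh_mult_Bm: "Bmh * Bm = Bh"
  unfolding diagm_mult_diagm by (rule eq_matI) (auto simp: diagm_def b_pos less_imp_le real_div_sqrt)

lemma Bmh_mult_b: "Bmh *\<^sub>v b = vec s (\<lambda>k. sqrt (b $ k))"
proof (rule eq_vecI)
  fix k assume "k < dim_vec (vec s (\<lambda>k. sqrt (b $ k)))"
  then have k: "k < s" by simp
  have "b $ k / sqrt (b $ k) = sqrt (b $ k)" using b_pos k by (simp add: real_div_sqrt less_imp_le)
  then show "(Bmh *\<^sub>v b) $ k = vec s (\<lambda>k. sqrt (b $ k)) $ k"
    using k by (subst index_diagm_mult_vec[OF b_carrier k]) simp
qed simp

lemma Bmh_Bh_cancel: "dim_row X = s \<Longrightarrow> Bmh * (Bh * X) = X"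
  and Bh_Bmh_cancel: "dim_row X = s \<Longrightarrow> Bh * (Bmh * X) = X"
  by (simp_all add: assoc_mult_mat_dim[symmetric] Bh_mult_Bmh Bmh_mult_Bh)

lemma index_scaled_Abar:
  "i < s \<Longrightarrow> j < s \<Longrightarrow> scaled_Abar $$ (i,j) = sqrt (b $ i) / sqrt (b $ j) * (A $$ (i,j) - b $ j / 2)"
  unfolding scaled_Abar_def
  by (subst index_mult_diagm[of _ s], simp add: carrier_matI, assumption+,
      subst index_diagm_mult[of _ s], auto)

(* Symplecticity says exactly that B Abar is skew-symmetric. *)
lemma transpose_scaled_Abar: "transpose_mat scaled_Abar = - scaled_Abar"
proof (rule eq_matI)
  fix i j assume "i < dim_row (- scaled_Abar)" "j < dim_col (- scaled_Abar)"
  then have ij: "i < s" "j < s" by auto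
  define x y where "x = sqrt (b $ i)" and "y = sqrt (b $ j)"
  have pos: "x > 0" "y > 0" using sqrt_b_pos ij by (simp_all add: x_def y_def)
  have sq: "b $ i = x * x" "b $ j = y * y" using b_pos ij by (simp_all add: x_def y_def less_imp_le)
  have skew: "y * y * (A $$ (j,i) - b $ i / 2) = - (x * x * (A $$ (i,j) - b $ j / 2))"
    using symplectic ij unfolding sq[symmetric] by (auto simp: algebra_simps)
  have "y / x * (A $$ (j,i) - b $ i / 2) = y * y * (A $$ (j,i) - b $ i / 2) / (x * y)"
    using pos by (simp add: field_simps)
  also have "\<dots> = - (x / y * (A $$ (i,j) - b $ j / 2))"
    unfolding skew using pos by (simp add: field_simps)
  finally show "transpose_mat scaled_Abar $$ (i,j) = (- scaled_Abar) $$ (i,j)"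
    using ij by (simp add: index_scaled_Abar x_def y_def)
qed auto

lemma flip_mat_scaled_Abar_flip_mat: "flip_mat s * (scaled_Abar * flip_mat s) = - scaled_Abar"
proof (rule eq_matI)
  fix i j assume "i < dim_row (- scaled_Abar)" "j < dim_col (- scaled_Abar)"
  then have ij: "i < s" "j < s" by auto
  then have ij': "s - 1 - i < s" "s - 1 - j < s" by auto
  have "(flip_mat s * (scaled_Abar * flip_mat s)) $$ (i,j) = scaled_Abar $$ (s - 1 - i, s - 1 - j)"
    using index_flip_mat_mult[of "scaled_Abar * flip_mat s" s s, OF _ ij] index_mult_flip_mat[OF scaled_Abar_carrier ij'(1) ij(2)]
    by (simp add: carrier_matI)
  also have "\<dots> = - scaled_Abar $$ (i,j)"
  proof -
    have "b $ (s - 1 - i) = b $ i" "b $ (s - 1 - j) = b $ j" using symmetric_b ij by auto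
    moreover have "A $$ (s - 1 - i, s - 1 - j) = b $ j - A $$ (i,j)" using symmetric_A ij by force
    ultimately show ?thesis by (simp only: index_scaled_Abar[OF ij'] index_scaled_Abar[OF ij]) (simp add: algebra_simps)
  qed
  finally show "(flip_mat s * (scaled_Abar * flip_mat s)) $$ (i,j) = (- scaled_Abar) $$ (i,j)" using ij by simp
qed auto

lemma P1_scaled_Abar_P1: "transpose_mat P1 * (scaled_Abar * P1) = 0\<^sub>m m m"
proof (rule eq_zero_mat_if_eq_uminus)
  show "transpose_mat P1 * (scaled_Abar * P1) \<in> carrier_mat m m" by (simp add: carrier_matI)
  have "transpose_mat P1 * (scaled_Abar * P1) = transpose_mat (flip_mat s * P1) * (scaled_Abar * (flip_mat s * P1))"
    by (simp add: flip_mat_mult_P1_mat)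
  also have "\<dots> = transpose_mat P1 * ((flip_mat s * (scaled_Abar * flip_mat s)) * P1)"
    by (simp add: mat_algebra_dim)
  finally show "transpose_mat P1 * (scaled_Abar * P1) = - (transpose_mat P1 * (scaled_Abar * P1))"
    by (simp add: flip_mat_scaled_Abar_flip_mat)
qed

lemma P2_scaled_Abar_P2: "transpose_mat P2 * (scaled_Abar * P2) = 0\<^sub>m (s - m) (s - m)"
proof (rule eq_zero_mat_if_eq_uminus)
  show "transpose_mat P2 * (scaled_Abar * P2) \<in> carrier_mat (s - m) (s - m)" by (simp add: carrier_matI)
  have "transpose_mat P2 * (scaled_Abar * P2) = transpose_mat (- (flip_mat s * P2)) * (scaled_Abar * (- (flip_mat s * P2)))"
    by (simp add: flip_mat_mult_P2_mat)
  also have "\<dots> = transpose_mat P2 * ((flip_mat s * (scaled_Abar * flip_mat s)) * P2)"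
    by (simp add: mat_algebra_dim transpose_uminus)
  finally show "transpose_mat P2 * (scaled_Abar * P2) = - (transpose_mat P2 * (scaled_Abar * P2))"
    by (simp add: flip_mat_scaled_Abar_flip_mat)
qed

end

locale symmetric_symplectic_rk_svd = symmetric_symplectic_rk +
  fixes U V D :: "real mat"
  assumes U_carrier: "U \<in> carrier_mat ((s + 1) div 2) ((s + 1) div 2)"
    and U_orth: "transpose_mat U * U = 1\<^sub>m ((s + 1) div 2)"
    and V_carrier: "V \<in> carrier_mat (s - (s + 1) div 2) (s - (s + 1) div 2)"
    and V_orth: "transpose_mat V * V = 1\<^sub>m (s - (s + 1) div 2)"
    and D_carrier: "D \<in> carrier_mat ((s + 1) div 2) (s - (s + 1) div 2)"
    and svd: "transpose_mat (P1_mat s) * diagm s (\<lambda>i. sqrt (b $ i)) * mat s s (\<lambda>(i,j). A $$ (i,j) - b $ j / 2)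
         * diagm s (\<lambda>i. 1 / sqrt (b $ i)) * P2_mat s = U * D * transpose_mat V"
begin

definition Q1 :: "real mat" where "Q1 = Bmh * P1 * U"
definition Q2 :: "real mat" where "Q2 = Bmh * P2 * V"
definition alpha :: "real vec" where "alpha = transpose_mat Q1 *\<^sub>v (Bm *\<^sub>v vec s (\<lambda>_. 1))"
definition G :: "real mat" where "G = mat m m (\<lambda>(i,j). alpha $ i * alpha $ j / 2)"

lemma dim_USV [simp]:
  "dim_row U = m" "dim_col U = m" "dim_row V = s - m" "dim_col V = s - m" "dim_row D = m" "dim_col D = s - m"
  using U_carrier V_carrier D_carrier by auto

lemma dim_Q [simp]:
  "dim_row Q1 = s" "dim_col Q1 = m" "dim_row Q2 = s" "dim_col Q2 = s - m"
  "dim_vec alpha = m" "dim_row G = m" "dim_col G = m"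
  by (simp_all add: Q1_def Q2_def alpha_def G_def)

lemma U_mult_transpose: "U * transpose_mat U = 1\<^sub>m m"
  by (rule mat_mult_left_right_inverse[OF _ U_carrier U_orth]) (use U_carrier in simp)

lemma V_mult_transpose: "V * transpose_mat V = 1\<^sub>m (s - m)"
  by (rule mat_mult_left_right_inverse[OF _ V_carrier V_orth]) (use V_carrier in simp)

lemma P1_scaled_Abar_P2: "transpose_mat P1 * (scaled_Abar * P2) = U * (D * transpose_mat V)"
  using svd by (simp add: scaled_Abar_def mat_algebra_dim)

lemma scaled_Abar_mult_P2: "scaled_Abar * P2 = P1 * (U * (D * transpose_mat V))"
proof -
  have "scaled_Abar * P2 = (P1 * transpose_mat P1 + P2 * transpose_mat P2) * (scaled_Abar * P2)"
    by (simp add: P1_P2_completeness)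
  also have "\<dots> = P1 * (transpose_mat P1 * (scaled_Abar * P2)) + P2 * (transpose_mat P2 * (scaled_Abar * P2))"
    by (simp add: mat_algebra_dim)
  finally show ?thesis by (simp add: P1_scaled_Abar_P2 P2_scaled_Abar_P2)
qed

lemma scaled_Abar_mult_P1: "scaled_Abar * P1 = - (P2 * (V * (transpose_mat D * transpose_mat U)))"
proof -
  have "transpose_mat (transpose_mat P2 * (scaled_Abar * P1)) = - (U * (D * transpose_mat V))"
    using P1_scaled_Abar_P2 by (simp add: mat_algebra_dim transpose_scaled_Abar)
  then have "transpose_mat P2 * (scaled_Abar * P1) = transpose_mat (- (U * (D * transpose_mat V)))"
    by (metis transpose_transpose)
  then have P2_scaled_Abar_P1: "transpose_mat P2 * (scaled_Abar * P1) = - (V * (transpose_mat D * transpose_mat U))"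
    by (simp add: mat_algebra_dim transpose_uminus)
  have "scaled_Abar * P1 = (P1 * transpose_mat P1 + P2 * transpose_mat P2) * (scaled_Abar * P1)"
    by (simp add: P1_P2_completeness)
  also have "\<dots> = P1 * (transpose_mat P1 * (scaled_Abar * P1)) + P2 * (transpose_mat P2 * (scaled_Abar * P1))"
    by (simp add: mat_algebra_dim)
  finally show ?thesis by (simp add: P1_scaled_Abar_P1 P2_scaled_Abar_P1)
qed

lemma Abar_mult_Q2: "Abar * Q2 = Q1 * D"
proof -
  have "Abar * Q2 = Bmh * ((scaled_Abar * P2) * V)"
    by (simp add: scaled_Abar_def Q2_def mat_algebra_dim Bmh_Bh_cancel Bh_Bmh_cancel carrier_matI
        flip: Bmh_mult_Bh)
  also have "\<dots> = Q1 * D"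
    by (simp add: scaled_Abar_mult_P2 Q1_def mat_algebra_dim V_orth)
  finally show ?thesis .
qed

lemma Abar_mult_Q1: "Abar * Q1 = - (Q2 * transpose_mat D)"
proof -
  have "Abar * Q1 = Bmh * ((scaled_Abar * P1) * U)"
    by (simp add: scaled_Abar_def Q1_def mat_algebra_dim Bmh_Bh_cancel Bh_Bmh_cancel carrier_matI
        flip: Bmh_mult_Bh)
  also have "\<dots> = - (Q2 * transpose_mat D)"
    by (simp add: scaled_Abar_mult_P1 Q2_def mat_algebra_dim U_orth)
  finally show ?thesis .
qed

lemma Q_completeness: "Q1 * (transpose_mat Q1 * Bm) + Q2 * (transpose_mat Q2 * Bm) = 1\<^sub>m s"
proof -
  have "Q1 * (transpose_mat Q1 * Bm) = Bmh * (P1 * (transpose_mat P1 * Bh))"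
    by (simp add: Q1_def mat_algebra_dim Bmh_mult_Bm U_mult_transpose flip: assoc_mult_mat_dim[of U])
  moreover have "Q2 * (transpose_mat Q2 * Bm) = Bmh * (P2 * (transpose_mat P2 * Bh))"
    by (simp add: Q2_def mat_algebra_dim Bmh_mult_Bm V_mult_transpose flip: assoc_mult_mat_dim[of V])
  moreover have "Bmh * (P1 * (transpose_mat P1 * Bh)) + Bmh * (P2 * (transpose_mat P2 * Bh))
      = Bmh * ((P1 * transpose_mat P1 + P2 * transpose_mat P2) * Bh)"
    by (simp add: mat_algebra_dim)
  ultimately show ?thesis by (simp add: P1_P2_completeness Bmh_mult_Bh)
qed

lemma Q2_transpose_mult_b: "transpose_mat Q2 *\<^sub>v b = 0\<^sub>v (s - m)"
proof -
  have "transpose_mat Q2 *\<^sub>v b = transpose_mat V *\<^sub>v (transpose_mat P2 *\<^sub>v vec s (\<lambda>k. sqrt (b $ k)))"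
    by (simp add: Q2_def mat_algebra_dim mat_vec_algebra_dim Bmh_mult_b)
  also have "\<dots> = 0\<^sub>v (s - m)"
    using symmetric_b by (simp add: P2_mat_transpose_mult_palindrome)
  finally show ?thesis .
qed

lemma Bm_mult_ones: "Bm *\<^sub>v vec s (\<lambda>_. 1) = b"
  by (rule eq_vecI) (subst index_diagm_mult_vec, auto)

lemma alpha_eq: "alpha = transpose_mat Q1 *\<^sub>v b"
  by (simp add: alpha_def Bm_mult_ones)

lemma Q1_mult_alpha: "Q1 *\<^sub>v alpha = vec s (\<lambda>_. 1)"
proof -
  let ?e = "vec s (\<lambda>_. 1 :: real)"
  have "?e = (Q1 * (transpose_mat Q1 * Bm) + Q2 * (transpose_mat Q2 * Bm)) *\<^sub>v ?e"
    by (simp add: Q_completeness)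
  also have "\<dots> = Q1 *\<^sub>v (transpose_mat Q1 *\<^sub>v (Bm *\<^sub>v ?e)) + Q2 *\<^sub>v (transpose_mat Q2 *\<^sub>v (Bm *\<^sub>v ?e))"
    by (simp add: mat_vec_algebra_dim)
  also have "\<dots> = Q1 *\<^sub>v alpha"
    by (simp add: Bm_mult_ones Q2_transpose_mult_b alpha_eq)
  finally show ?thesis by simp
qed

lemma rank_one_part_mult:
  "X \<in> carrier_mat s n \<Longrightarrow>
    mat s s (\<lambda>(i,j). b $ j / 2) * X = mat s n (\<lambda>(i,j). (transpose_mat X *\<^sub>v b) $ j / 2)"
  by (rule eq_matI) (auto simp: scalar_prod_def sum_divide_distrib mult.commute)

lemma A_eq_Abar_plus: "A = Abar + mat s s (\<lambda>(i,j). b $ j / 2)"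
  by (rule eq_matI) auto

lemma A_mult_Q2: "A * Q2 = Q1 * D"
proof -
  have "mat s s (\<lambda>(i,j). b $ j / 2) * Q2 = 0\<^sub>m s (s - m)"
    by (auto simp: rank_one_part_mult[of _ "s - m"] Q2_transpose_mult_b carrier_matI intro!: eq_matI)
  then show ?thesis
    by (subst A_eq_Abar_plus) (simp add: add_mult_distrib_mat_dim Abar_mult_Q2)
qed

lemma A_mult_Q1: "A * Q1 = - (Q2 * transpose_mat D) + Q1 * G"
proof -
  have "mat s s (\<lambda>(i,j). b $ j / 2) * Q1 = Q1 * G"
  proof (rule eq_matI)
    fix i j assume "i < dim_row (Q1 * G)" "j < dim_col (Q1 * G)"
    then have ij: "i < s" "j < m" by auto
    have "(Q1 * G) $$ (i,j) = (\<Sum>l\<in>{0..<m}. Q1 $$ (i,l) * alpha $ l) * alpha $ j / 2"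
      using ij by (simp add: G_def scalar_prod_def sum_distrib_right sum_divide_distrib mult.assoc)
    also have "(\<Sum>l\<in>{0..<m}. Q1 $$ (i,l) * alpha $ l) = 1"
      using arg_cong[OF Q1_mult_alpha, of "\<lambda>v. v $ i"] ij by (simp add: scalar_prod_def)
    finally show "(mat s s (\<lambda>(i,j). b $ j / 2) * Q1) $$ (i,j) = (Q1 * G) $$ (i,j)"
      using ij by (simp add: rank_one_part_mult[of _ m] alpha_eq[symmetric] carrier_matI)
  qed auto
  then show ?thesis
    by (subst A_eq_Abar_plus) (simp add: add_mult_distrib_mat_dim Abar_mult_Q1)
qed

end

section \<open>Solving the simplified Newton system\<close>

lemma kron_identity_minus_mult_flatten_mat:
  assumes A: "A \<in> carrier_mat s s" and J: "J \<in> carrier_mat d d" and Y: "Y \<in> carrier_mat s d"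
  shows "(kron (1\<^sub>m s) (1\<^sub>m d) - h \<cdot>\<^sub>m kron A J) *\<^sub>v flatten_mat Y
    = flatten_mat (Y - h \<cdot>\<^sub>m (A * (Y * transpose_mat J)))"
proof -
  have "(kron (1\<^sub>m s) (1\<^sub>m d) - h \<cdot>\<^sub>m kron A J) *\<^sub>v flatten_mat Y
      = kron (1\<^sub>m s) (1\<^sub>m d) *\<^sub>v flatten_mat Y - h \<cdot>\<^sub>v (kron A J *\<^sub>v flatten_mat Y)"
    using A J Y by (simp add: minus_mult_distrib_mat_vec_dim smult_mat_mult_vec_dim)
  also have "\<dots> = flatten_mat Y - h \<cdot>\<^sub>v flatten_mat (A * Y * transpose_mat J)"
    using A J Y by (simp add: kron_mult_flatten_mat)
  also have "\<dots> = flatten_mat (Y - h \<cdot>\<^sub>m (A * (Y * transpose_mat J)))"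
    using A J Y by (simp add: flatten_mat_minus flatten_mat_smult assoc_mult_mat_dim)
  finally show ?thesis .
qed

lemma dim_vsum [simp]: "dim_vec (vsum n F I) = n"
  by (simp add: vsum_def)

lemma index_vsum [simp]: "k < n \<Longrightarrow> vsum n F I $ k = (\<Sum>i\<in>I. F i $ k)"
  by (simp add: vsum_def)

lemma dim_msum [simp]: "dim_row (msum n n' F I) = n" "dim_col (msum n n' F I) = n'"
  by (simp_all add: msum_def)

lemma msum_mult_vec:
  assumes F: "\<And>i. i \<in> I \<Longrightarrow> F i \<in> carrier_mat n n'" and v: "v \<in> carrier_vec n'"
  shows "msum n n' F I *\<^sub>v v = vsum n (\<lambda>i. F i *\<^sub>v v) I"
proof (rule eq_vecI)
  fix k assume "k < dim_vec (vsum n (\<lambda>i. F i *\<^sub>v v) I)"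
  then have k: "k < n" by simp
  have "(msum n n' F I *\<^sub>v v) $ k = (\<Sum>l\<in>{0..<n'}. \<Sum>i\<in>I. F i $$ (k,l) * v $ l)"
    using k v by (simp add: msum_def scalar_prod_def sum_distrib_right)
  also have "\<dots> = (\<Sum>i\<in>I. (F i *\<^sub>v v) $ k)"
  proof (subst sum.swap, rule sum.cong)
    fix i assume "i \<in> I"
    then show "(\<Sum>l\<in>{0..<n'}. F i $$ (k,l) * v $ l) = (F i *\<^sub>v v) $ k"
      using carrier_matD[OF F] carrier_vecD[OF v] k by (simp add: scalar_prod_def)
  qed simp
  finally show "(msum n n' F I *\<^sub>v v) $ k = vsum n (\<lambda>i. F i *\<^sub>v v) I $ k" using k by simp
qed simp

(* The coupling term Delta z = h J (sum_j alpha_j W_j) is determined by the Schur complement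
   equation M Delta z = h J (sum_i alpha_i N_i^(-1) R_i). *)
lemma arrow_block_elimination:
  fixes J :: "real mat" and N :: "nat \<Rightarrow> real mat" and \<alpha> :: "real vec" and R :: "nat \<Rightarrow> real vec"
    and h :: real
  assumes J: "J \<in> carrier_mat d d" and R: "\<And>i. i < m \<Longrightarrow> R i \<in> carrier_vec d"
    and N: "\<And>i. i < m \<Longrightarrow> N i \<in> carrier_mat d d" and N_inv: "\<forall>i<m. invertible_mat (N i)"
  defines "M \<equiv> 1\<^sub>m d - J * ((h / 2) \<cdot>\<^sub>m msum d d (\<lambda>i. ((\<alpha> $ i)\<^sup>2) \<cdot>\<^sub>m minv (N i)) {..<m})"
  assumes M_inv: "invertible_mat M"
  defines "\<Delta>z \<equiv> minv M *\<^sub>v (h \<cdot>\<^sub>v (J *\<^sub>v vsum d (\<lambda>i. \<alpha> $ i \<cdot>\<^sub>v (minv (N i) *\<^sub>v R i)) {..<m}))"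
  defines "W \<equiv> (\<lambda>i. minv (N i) *\<^sub>v (R i + (\<alpha> $ i / 2) \<cdot>\<^sub>v \<Delta>z))"
  assumes i: "i < m"
  shows "N i *\<^sub>v W i - (h * (\<alpha> $ i / 2)) \<cdot>\<^sub>v (J *\<^sub>v vsum d (\<lambda>j. \<alpha> $ j \<cdot>\<^sub>v W j) {..<m}) = R i"
proof -
  define c where "c = vsum d (\<lambda>i. \<alpha> $ i \<cdot>\<^sub>v (minv (N i) *\<^sub>v R i)) {..<m}"
  define T where "T = msum d d (\<lambda>i. ((\<alpha> $ i)\<^sup>2) \<cdot>\<^sub>m minv (N i)) {..<m}"
  define z where "z = vsum d (\<lambda>j. \<alpha> $ j \<cdot>\<^sub>v W j) {..<m}"
  have Ninv: "minv (N j) \<in> carrier_mat d d" "N j * minv (N j) = 1\<^sub>m d" if "j < m" for j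
    using minv_inverse[OF N_inv[rule_format, OF that] N[OF that]] by auto
  have Ninv_dim [simp]: "dim_row (minv (N j)) = d" "dim_col (minv (N j)) = d" if "j < m" for j
    using Ninv(1)[OF that] by auto
  have W_dim [simp]: "dim_vec (W j) = d" if "j < m" for j
    using that by (simp add: W_def)
  have T_dim [simp]: "dim_row T = d" "dim_col T = d"
    by (simp_all add: T_def)
  have M: "M \<in> carrier_mat d d" unfolding M_def using J by (auto simp: msum_def)
  have Minv: "minv M \<in> carrier_mat d d" "M * minv M = 1\<^sub>m d"
    using minv_inverse[OF M_inv M] by auto
  have J_dim [simp]: "dim_row J = d" "dim_col J = d" using J by auto
  have \<Delta>z_dim [simp]: "dim_vec \<Delta>z = d" using Minv by (simp add: \<Delta>z_def)
  have schur: "M *\<^sub>v \<Delta>z = h \<cdot>\<^sub>v (J *\<^sub>v c)"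
    using Minv M by (simp add: \<Delta>z_def c_def flip: assoc_mult_mat_vec_dim)
  have M_\<Delta>z: "M *\<^sub>v \<Delta>z = \<Delta>z - (h / 2) \<cdot>\<^sub>v (J *\<^sub>v (T *\<^sub>v \<Delta>z))"
    by (simp add: M_def T_def mat_algebra_dim mat_vec_algebra_dim)
  have z_eq: "z = c + (1 / 2) \<cdot>\<^sub>v (T *\<^sub>v \<Delta>z)"
  proof (rule eq_vecI)
    fix k assume "k < dim_vec (c + (1 / 2) \<cdot>\<^sub>v (T *\<^sub>v \<Delta>z))"
    then have k: "k < d" by (simp add: c_def)
    have "T *\<^sub>v \<Delta>z = vsum d (\<lambda>j. ((\<alpha> $ j)\<^sup>2 \<cdot>\<^sub>m minv (N j)) *\<^sub>v \<Delta>z) {..<m}"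
      unfolding T_def using Ninv by (intro msum_mult_vec) (auto intro!: carrier_vecI)
    then have T_\<Delta>z: "(T *\<^sub>v \<Delta>z) $ k = (\<Sum>j<m. (\<alpha> $ j)\<^sup>2 * (minv (N j) *\<^sub>v \<Delta>z) $ k)"
      using k Ninv by (auto simp: smult_mat_mult_vec_dim intro!: sum.cong)
    have W: "W j $ k = (minv (N j) *\<^sub>v R j) $ k + \<alpha> $ j / 2 * (minv (N j) *\<^sub>v \<Delta>z) $ k"
      if "j < m" for j
      using that k Ninv[OF that] R[OF that] by (simp add: W_def mat_vec_algebra_dim)
    have "z $ k = (\<Sum>j<m. \<alpha> $ j * (minv (N j) *\<^sub>v R j) $ k + 1 / 2 * ((\<alpha> $ j)\<^sup>2 * (minv (N j) *\<^sub>v \<Delta>z) $ k))"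
      using k by (auto simp: z_def W algebra_simps power2_eq_square intro!: sum.cong)
    also have "\<dots> = (c + (1 / 2) \<cdot>\<^sub>v (T *\<^sub>v \<Delta>z)) $ k"
      using k Ninv R by (auto simp: c_def T_\<Delta>z sum.distrib sum_distrib_left intro!: sum.cong)
    finally show "z $ k = (c + (1 / 2) \<cdot>\<^sub>v (T *\<^sub>v \<Delta>z)) $ k" .
  qed (simp add: z_def c_def)
  have \<Delta>z_eq: "\<Delta>z = h \<cdot>\<^sub>v (J *\<^sub>v z)"
  proof (rule eq_vecI)
    fix k assume "k < dim_vec (h \<cdot>\<^sub>v (J *\<^sub>v z))"
    then have k: "k < d" by simp
    have "\<Delta>z $ k - h / 2 * (J *\<^sub>v (T *\<^sub>v \<Delta>z)) $ k = h * (J *\<^sub>v c) $ k"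
      using arg_cong[OF schur[unfolded M_\<Delta>z], of "\<lambda>v. v $ k"] k by simp
    moreover have "J *\<^sub>v z = J *\<^sub>v c + (1 / 2) \<cdot>\<^sub>v (J *\<^sub>v (T *\<^sub>v \<Delta>z))"
      by (simp add: z_eq c_def mat_vec_algebra_dim)
    ultimately show "\<Delta>z $ k = (h \<cdot>\<^sub>v (J *\<^sub>v z)) $ k"
      using k by (simp add: algebra_simps)
  qed simp
  have "N i *\<^sub>v W i = R i + (\<alpha> $ i / 2) \<cdot>\<^sub>v \<Delta>z"
    using Ninv[OF i] N[OF i] R[OF i] by (simp add: W_def flip: assoc_mult_mat_vec_dim)
  then show ?thesis using R[OF i] by (auto simp: \<Delta>z_eq z_def intro!: eq_vecI)
qed

lemma mult_transpose_rect_diag: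
  fixes D :: "real mat"
  assumes D: "D \<in> carrier_mat n n'" and diag: "\<forall>i<n. \<forall>j<n'. i \<noteq> j \<longrightarrow> D $$ (i,j) = 0"
  shows "D * transpose_mat D = diagm n (\<lambda>i. (if i < n' then D $$ (i,i) else 0)\<^sup>2)"
proof (rule eq_matI)
  fix i j assume "i < dim_row (diagm n (\<lambda>i. (if i < n' then D $$ (i,i) else 0)\<^sup>2))"
    "j < dim_col (diagm n (\<lambda>i. (if i < n' then D $$ (i,i) else 0)\<^sup>2))"
  then have ij: "i < n" "j < n" by auto
  have "(D * transpose_mat D) $$ (i,j) = (\<Sum>l\<in>{0..<n'}. D $$ (i,l) * D $$ (j,l))"
    using ij D by (simp add: scalar_prod_def)
  also have "\<dots> = (\<Sum>l\<in>{0..<n'}. if l = i then (if i = j then D $$ (i,i) * D $$ (i,i) else 0) else 0)"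
    using ij diag by (intro sum.cong refl) auto
  also have "\<dots> = diagm n (\<lambda>i. (if i < n' then D $$ (i,i) else 0)\<^sup>2) $$ (i,j)"
    using ij by (auto simp: diagm_def power2_eq_square sum.delta)
  finally show "(D * transpose_mat D) $$ (i,j) = diagm n (\<lambda>i. (if i < n' then D $$ (i,i) else 0)\<^sup>2) $$ (i,j)" .
qed (use D in auto)

lemma block_rows_eq_reduced_system:
  fixes D J :: "real mat" and W R :: "nat \<Rightarrow> real vec" and \<alpha> :: "real vec" and h :: real
  assumes D: "D \<in> carrier_mat n n'" and diag: "\<forall>i<n. \<forall>j<n'. i \<noteq> j \<longrightarrow> D $$ (i,j) = 0"
    and J: "J \<in> carrier_mat d d" and W: "\<And>i. i < n \<Longrightarrow> W i \<in> carrier_vec d"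
    and block: "\<And>i. i < n \<Longrightarrow>
      (1\<^sub>m d + (h\<^sup>2 * (if i < n' then D $$ (i,i) else 0)\<^sup>2) \<cdot>\<^sub>m (J * J)) *\<^sub>v W i
      - (h * (\<alpha> $ i / 2)) \<cdot>\<^sub>v (J *\<^sub>v vsum d (\<lambda>j. \<alpha> $ j \<cdot>\<^sub>v W j) {..<n}) = R i"
  defines "WM \<equiv> mat n d (\<lambda>(j,k). W j $ k)"
  shows "WM + h\<^sup>2 \<cdot>\<^sub>m (D * (transpose_mat D * (WM * (transpose_mat J * transpose_mat J))))
     + (- h) \<cdot>\<^sub>m (mat n n (\<lambda>(i,j). \<alpha> $ i * \<alpha> $ j / 2) * (WM * transpose_mat J)) = mat n d (\<lambda>(i,k). R i $ k)"
proof (rule eq_matI)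
  define \<sigma> where "\<sigma> i = (if i < n' then D $$ (i,i) else 0)" for i
  have J_dim [simp]: "dim_row J = d" "dim_col J = d" and D_dim [simp]: "dim_row D = n" "dim_col D = n'"
    using J D by auto
  have WM_dim [simp]: "dim_row WM = n" "dim_col WM = d" by (simp_all add: WM_def)
  have W_dim [simp]: "dim_vec (W j) = d" if "j < n" for j using W[OF that] by auto
  fix i k assume "i < dim_row (mat n d (\<lambda>(i,k). R i $ k))" "k < dim_col (mat n d (\<lambda>(i,k). R i $ k))"
  then have ik: "i < n" "k < d" by auto
  have "(D * (transpose_mat D * (WM * (transpose_mat J * transpose_mat J)))) $$ (i,k)
      = (diagm n (\<lambda>i. (\<sigma> i)\<^sup>2) * (WM * (transpose_mat J * transpose_mat J))) $$ (i,k)"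
    by (simp add: mult_transpose_rect_diag[OF D diag, folded \<sigma>_def] flip: assoc_mult_mat_dim)
  also have "\<dots> = (\<sigma> i)\<^sup>2 * (WM * (transpose_mat J * transpose_mat J)) $$ (i,k)"
    using ik by (intro index_diagm_mult) (auto intro!: carrier_matI)
  also have "(WM * (transpose_mat J * transpose_mat J)) $$ (i,k)
      = (\<Sum>l\<in>{0..<d}. W i $ l * (\<Sum>m\<in>{0..<d}. J $$ (m,l) * J $$ (k,m)))"
    using ik by (simp add: WM_def scalar_prod_def)
  also have "\<dots> = ((J * J) *\<^sub>v W i) $ k"
    using ik by (simp add: scalar_prod_def mult.commute mult.left_commute)
  finally have DD: "(D * (transpose_mat D * (WM * (transpose_mat J * transpose_mat J)))) $$ (i,k)
      = (\<sigma> i)\<^sup>2 * ((J * J) *\<^sub>v W i) $ k" .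
  have "(mat n n (\<lambda>(i,j). \<alpha> $ i * \<alpha> $ j / 2) * (WM * transpose_mat J)) $$ (i,k)
      = (\<Sum>j\<in>{0..<n}. \<alpha> $ i * \<alpha> $ j / 2 * (\<Sum>l\<in>{0..<d}. W j $ l * J $$ (k,l)))"
    using ik by (simp add: WM_def scalar_prod_def)
  also have "\<dots> = (\<Sum>l\<in>{0..<d}. \<Sum>j\<in>{0..<n}. (\<alpha> $ i / 2) * (J $$ (k,l) * (\<alpha> $ j * W j $ l)))"
    by (subst sum.swap) (simp add: sum_distrib_left mult.commute mult.left_commute)
  also have "\<dots> = (\<alpha> $ i / 2) * (\<Sum>l\<in>{0..<d}. J $$ (k,l) * (\<Sum>j<n. \<alpha> $ j * W j $ l))"
    by (simp add: sum_distrib_left atLeast0LessThan)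
  also have "\<dots> = (\<alpha> $ i / 2) * (J *\<^sub>v vsum d (\<lambda>j. \<alpha> $ j \<cdot>\<^sub>v W j) {..<n}) $ k"
    using ik by (auto simp: scalar_prod_def intro!: sum.cong arg_cong2[where f = "(*)"])
  finally have GW: "(mat n n (\<lambda>(i,j). \<alpha> $ i * \<alpha> $ j / 2) * (WM * transpose_mat J)) $$ (i,k)
      = (\<alpha> $ i / 2) * (J *\<^sub>v vsum d (\<lambda>j. \<alpha> $ j \<cdot>\<^sub>v W j) {..<n}) $ k" .
  have R: "R i $ k = W i $ k + h\<^sup>2 * (\<sigma> i)\<^sup>2 * ((J * J) *\<^sub>v W i) $ k
      - h * (\<alpha> $ i / 2) * (J *\<^sub>v vsum d (\<lambda>j. \<alpha> $ j \<cdot>\<^sub>v W j) {..<n}) $ k"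
    using arg_cong[OF block[OF ik(1)], of "\<lambda>v. v $ k"] ik
    by (simp add: \<sigma>_def mat_vec_algebra_dim)
  have "(WM + h\<^sup>2 \<cdot>\<^sub>m (D * (transpose_mat D * (WM * (transpose_mat J * transpose_mat J))))
     + (- h) \<cdot>\<^sub>m (mat n n (\<lambda>(i,j). \<alpha> $ i * \<alpha> $ j / 2) * (WM * transpose_mat J))) $$ (i,k)
     = W i $ k + h\<^sup>2 * (D * (transpose_mat D * (WM * (transpose_mat J * transpose_mat J)))) $$ (i,k)
       + (- h) * (mat n n (\<lambda>(i,j). \<alpha> $ i * \<alpha> $ j / 2) * (WM * transpose_mat J)) $$ (i,k)"
    using ik by (simp add: WM_def del: index_mult_mat(1))
  also have "\<dots> = R i $ k"
    unfolding DD GW R by (simp add: algebra_simps)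
  finally show "(WM + h\<^sup>2 \<cdot>\<^sub>m (D * (transpose_mat D * (WM * (transpose_mat J * transpose_mat J))))
     + (- h) \<cdot>\<^sub>m (mat n n (\<lambda>(i,j). \<alpha> $ i * \<alpha> $ j / 2) * (WM * transpose_mat J))) $$ (i,k)
     = mat n d (\<lambda>(i,k). R i $ k) $$ (i,k)"
    using ik by simp
qed (use J in auto)

lemma reduced_system_back_substitution:
  fixes Q1 Q2 A D G J W r B :: "real mat" and h :: real
  assumes Q1: "Q1 \<in> carrier_mat s n" and Q2: "Q2 \<in> carrier_mat s n'" and A: "A \<in> carrier_mat s s"
    and D: "D \<in> carrier_mat n n'" and G: "G \<in> carrier_mat n n" and J: "J \<in> carrier_mat d d"
    and W: "W \<in> carrier_mat n d" and r: "r \<in> carrier_mat s d" and B: "B \<in> carrier_mat s s"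
    and AQ1: "A * Q1 = - (Q2 * transpose_mat D) + Q1 * G"
    and AQ2: "A * Q2 = Q1 * D"
    and completeness: "Q1 * (transpose_mat Q1 * B) + Q2 * (transpose_mat Q2 * B) = 1\<^sub>m s"
    and reduced: "W + h\<^sup>2 \<cdot>\<^sub>m (D * (transpose_mat D * (W * (transpose_mat J * transpose_mat J))))
        + (- h) \<cdot>\<^sub>m (G * (W * transpose_mat J))
      = transpose_mat Q1 * (B * r) + h \<cdot>\<^sub>m (D * (transpose_mat Q2 * (B * (r * transpose_mat J))))"
  defines "Y \<equiv> Q1 * W + Q2 * ((- h) \<cdot>\<^sub>m (transpose_mat D * (W * transpose_mat J)) + transpose_mat Q2 * (B * r))"
  shows "Y - h \<cdot>\<^sub>m (A * (Y * transpose_mat J)) = r"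
proof -
  note dims [simp] = carrier_matD[OF Q1] carrier_matD[OF Q2] carrier_matD[OF A] carrier_matD[OF D]
    carrier_matD[OF G] carrier_matD[OF J] carrier_matD[OF W] carrier_matD[OF r] carrier_matD[OF B]
  have AQ1': "A * (Q1 * X) = - (Q2 * (transpose_mat D * X)) + Q1 * (G * X)" if "dim_row X = n" for X
    using that by (simp add: AQ1 mat_algebra_dim flip: assoc_mult_mat_dim[of A])
  have AQ2': "A * (Q2 * X) = Q1 * (D * X)" if "dim_row X = n'" for X
    using that by (simp add: AQ2 mat_algebra_dim flip: assoc_mult_mat_dim[of A])
  show ?thesis
  proof (rule eq_matI)
    fix i j assume "i < dim_row r" "j < dim_col r"
    then have ij: "i < s" "j < d" by auto
    note simps = mat_algebra_dim AQ1' AQ2'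
    have red: "(Q1 * W) $$ (i,j) + h\<^sup>2 * (Q1 * (D * (transpose_mat D * (W * (transpose_mat J * transpose_mat J))))) $$ (i,j)
        + (- h) * (Q1 * (G * (W * transpose_mat J))) $$ (i,j)
      = (Q1 * (transpose_mat Q1 * (B * r))) $$ (i,j) + h * (Q1 * (D * (transpose_mat Q2 * (B * (r * transpose_mat J))))) $$ (i,j)"
      using arg_cong[OF reduced, of "\<lambda>X. (Q1 * X) $$ (i,j)"] ij by (simp add: simps del: index_mult_mat(1))
    have compl: "(Q1 * (transpose_mat Q1 * (B * r))) $$ (i,j) + (Q2 * (transpose_mat Q2 * (B * r))) $$ (i,j) = r $$ (i,j)"
      using arg_cong[OF completeness, of "\<lambda>X. (X * r) $$ (i,j)"] ij by (simp add: simps del: index_mult_mat(1))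
    have "(Y - h \<cdot>\<^sub>m (A * (Y * transpose_mat J))) $$ (i,j)
      = (Q1 * W) $$ (i,j) + ((- h) * (Q2 * (transpose_mat D * (W * transpose_mat J))) $$ (i,j)
          + (Q2 * (transpose_mat Q2 * (B * r))) $$ (i,j))
        + (- h) * (- (Q2 * (transpose_mat D * (W * transpose_mat J))) $$ (i,j)
          + (Q1 * (G * (W * transpose_mat J))) $$ (i,j)
          + ((- h) * (Q1 * (D * (transpose_mat D * (W * (transpose_mat J * transpose_mat J))))) $$ (i,j)
            + (Q1 * (D * (transpose_mat Q2 * (B * (r * transpose_mat J))))) $$ (i,j)))"
      using ij by (simp add: Y_def simps del: index_mult_mat(1))
    also have "\<dots> = r $$ (i,j)" using red compl by (simp add: algebra_simps power2_eq_square)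
    finally show "(Y - h \<cdot>\<^sub>m (A * (Y * transpose_mat J))) $$ (i,j) = r $$ (i,j)" .
  qed (auto simp: Y_def)
qed

context symmetric_symplectic_rk_svd
begin

definition sigma :: "nat \<Rightarrow> real" where
  "sigma i = (if i < s - m then D $$ (i,i) else 0)"

definition N_mat :: "nat \<Rightarrow> real mat \<Rightarrow> real \<Rightarrow> nat \<Rightarrow> real mat" where
  "N_mat d J h i = 1\<^sub>m d + (h\<^sup>2 * (sigma i)\<^sup>2) \<cdot>\<^sub>m (J * J)"

definition M_mat :: "nat \<Rightarrow> real mat \<Rightarrow> real \<Rightarrow> real mat" where
  "M_mat d J h = 1\<^sub>m d - J * ((h / 2) \<cdot>\<^sub>m msum d d (\<lambda>i. ((alpha $ i)\<^sup>2) \<cdot>\<^sub>m minv (N_mat d J h i)) {..<m})"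

definition newton_rhs :: "nat \<Rightarrow> real mat \<Rightarrow> real \<Rightarrow> real vec \<Rightarrow> real vec" where
  "newton_rhs d J h r = kron (transpose_mat Q1 * Bm) (1\<^sub>m d) *\<^sub>v r + h \<cdot>\<^sub>v (kron (D * transpose_mat Q2 * Bm) J *\<^sub>v r)"

definition newton_blocks :: "nat \<Rightarrow> real mat \<Rightarrow> real \<Rightarrow> real vec \<Rightarrow> nat \<Rightarrow> real vec" where
  "newton_blocks d J h r =
    (let R = newton_rhs d J h r;
         \<Delta>z = minv (M_mat d J h) *\<^sub>v (h \<cdot>\<^sub>v (J *\<^sub>v
                vsum d (\<lambda>i. alpha $ i \<cdot>\<^sub>v (minv (N_mat d J h i) *\<^sub>v block_vec d R i)) {..<m}))
     in (\<lambda>i. minv (N_mat d J h i) *\<^sub>v (block_vec d R i + (alpha $ i / 2) \<cdot>\<^sub>v \<Delta>z)))"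

definition newton_increment :: "nat \<Rightarrow> real mat \<Rightarrow> real \<Rightarrow> real vec \<Rightarrow> real vec" where
  "newton_increment d J h r =
    (let W' = stack_vec m d (newton_blocks d J h r);
         W'' = (- h) \<cdot>\<^sub>v (kron (transpose_mat D) J *\<^sub>v W') + kron (transpose_mat Q2 * Bm) (1\<^sub>m d) *\<^sub>v r
     in kron Q1 (1\<^sub>m d) *\<^sub>v W' + kron Q2 (1\<^sub>m d) *\<^sub>v W'')"

lemma newton_blocks_solve_reduced_system:
  assumes D_diag: "\<forall>i<m. \<forall>j<s - m. i \<noteq> j \<longrightarrow> D $$ (i,j) = 0"
    and J: "J \<in> carrier_mat d d" and r: "r \<in> carrier_mat s d"
    and N_inv: "\<forall>i<m. invertible_mat (N_mat d J h i)" and M_inv: "invertible_mat (M_mat d J h)"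
  defines "W \<equiv> mat m d (\<lambda>(j,k). newton_blocks d J h (flatten_mat r) j $ k)"
  shows "W + h\<^sup>2 \<cdot>\<^sub>m (D * (transpose_mat D * (W * (transpose_mat J * transpose_mat J))))
      + (- h) \<cdot>\<^sub>m (G * (W * transpose_mat J))
    = transpose_mat Q1 * (Bm * r) + h \<cdot>\<^sub>m (D * (transpose_mat Q2 * (Bm * (r * transpose_mat J))))"
    (is "_ = ?RM")
proof -
  let ?R = "newton_rhs d J h (flatten_mat r)"
  let ?W = "newton_blocks d J h (flatten_mat r)"
  have R_eq: "?R = flatten_mat ?RM"
    unfolding newton_rhs_def using J r
    by (simp add: kron_mult_flatten_mat flatten_mat_add flatten_mat_smult mat_algebra_dim)
  have N_carrier: "N_mat d J h i \<in> carrier_mat d d" for i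
    using J by (simp add: N_mat_def)
  have W_carrier: "?W i \<in> carrier_vec d" if "i < m" for i
    using minv_inverse(1)[OF N_inv[rule_format, OF that] N_carrier]
    by (simp add: newton_blocks_def Let_def carrier_vecI)
  have block: "N_mat d J h i *\<^sub>v ?W i
      - (h * (alpha $ i / 2)) \<cdot>\<^sub>v (J *\<^sub>v vsum d (\<lambda>j. alpha $ j \<cdot>\<^sub>v ?W j) {..<m}) = block_vec d ?R i"
    if "i < m" for i
  proof -
    have "block_vec d ?R j \<in> carrier_vec d" for j
      by (simp add: block_vec_def)
    from arrow_block_elimination[OF J this N_carrier N_inv M_inv[unfolded M_mat_def] that]
    show ?thesis unfolding newton_blocks_def Let_def M_mat_def .
  qed
  have "W + h\<^sup>2 \<cdot>\<^sub>m (D * (transpose_mat D * (W * (transpose_mat J * transpose_mat J))))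
      + (- h) \<cdot>\<^sub>m (G * (W * transpose_mat J)) = mat m d (\<lambda>(i,k). block_vec d ?R i $ k)"
    using block_rows_eq_reduced_system[OF D_carrier D_diag J W_carrier block[unfolded N_mat_def sigma_def]]
    unfolding W_def G_def .
  also have "\<dots> = ?RM"
    unfolding R_eq by (rule block_vec_flatten_mat) (use J r in \<open>auto intro!: carrier_matI\<close>)
  finally show ?thesis .
qed

lemma newton_increment_solves:
  assumes D_diag: "\<forall>i<m. \<forall>j<s - m. i \<noteq> j \<longrightarrow> D $$ (i,j) = 0"
    and J: "J \<in> carrier_mat d d" and r: "r \<in> carrier_vec (s * d)"
    and N_inv: "\<forall>i<m. invertible_mat (N_mat d J h i)" and M_inv: "invertible_mat (M_mat d J h)"
  shows "newton_increment d J h r \<in> carrier_vec (s * d)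
    \<and> (kron (1\<^sub>m s) (1\<^sub>m d) - h \<cdot>\<^sub>m kron A J) *\<^sub>v newton_increment d J h r = r"
proof -
  define rM where "rM = reshape_mat s d r"
  have rM: "rM \<in> carrier_mat s d" and r_eq: "r = flatten_mat rM"
    using r by (simp_all add: rM_def flatten_reshape_mat)
  define W where "W = mat m d (\<lambda>(j,k). newton_blocks d J h r j $ k)"
  define W2 where "W2 = (- h) \<cdot>\<^sub>m (transpose_mat D * (W * transpose_mat J)) + transpose_mat Q2 * (Bm * rM)"
  define Y where "Y = Q1 * W + Q2 * W2"
  have carriers: "Q1 \<in> carrier_mat s m" "Q2 \<in> carrier_mat s (s - m)" "G \<in> carrier_mat m m"
    "Bm \<in> carrier_mat s s" "W \<in> carrier_mat m d" "W2 \<in> carrier_mat (s - m) d"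
    using J rM by (auto simp: W_def W2_def intro!: carrier_matI)
  then have Y: "Y \<in> carrier_mat s d"
    unfolding Y_def by (meson add_carrier_mat mult_carrier_mat)
  have "newton_increment d J h r = kron Q1 (1\<^sub>m d) *\<^sub>v flatten_mat W
      + kron Q2 (1\<^sub>m d) *\<^sub>v ((- h) \<cdot>\<^sub>v (kron (transpose_mat D) J *\<^sub>v flatten_mat W)
        + kron (transpose_mat Q2 * Bm) (1\<^sub>m d) *\<^sub>v flatten_mat rM)"
    by (simp add: newton_increment_def Let_def W_def stack_vec_eq_flatten_mat flip: r_eq)
  also have "(- h) \<cdot>\<^sub>v (kron (transpose_mat D) J *\<^sub>v flatten_mat W)
      + kron (transpose_mat Q2 * Bm) (1\<^sub>m d) *\<^sub>v flatten_mat rM = flatten_mat W2"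
    using J carriers rM by (simp add: W2_def kron_mult_flatten_mat flatten_mat_add flatten_mat_smult mat_algebra_dim)
  also have "kron Q1 (1\<^sub>m d) *\<^sub>v flatten_mat W + kron Q2 (1\<^sub>m d) *\<^sub>v flatten_mat W2 = flatten_mat Y"
    using carriers by (simp add: Y_def kron_mult_flatten_mat flatten_mat_add)
  finally have increment_eq: "newton_increment d J h r = flatten_mat Y" .
  have "W + h\<^sup>2 \<cdot>\<^sub>m (D * (transpose_mat D * (W * (transpose_mat J * transpose_mat J))))
      + (- h) \<cdot>\<^sub>m (G * (W * transpose_mat J))
    = transpose_mat Q1 * (Bm * rM) + h \<cdot>\<^sub>m (D * (transpose_mat Q2 * (Bm * (rM * transpose_mat J))))"
    unfolding W_def r_eq by (rule newton_blocks_solve_reduced_system[OF D_diag J rM N_inv M_inv])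
  then have "Y - h \<cdot>\<^sub>m (A * (Y * transpose_mat J)) = rM"
    unfolding Y_def W2_def
    by (rule reduced_system_back_substitution[OF carriers(1,2) A_carrier D_carrier carriers(3) J carriers(5) rM
        carriers(4) A_mult_Q1 A_mult_Q2 Q_completeness])
  then show ?thesis
    using Y by (simp add: increment_eq kron_identity_minus_mult_flatten_mat[OF A_carrier J Y] carrier_vecI
        flip: r_eq)
qed

end

theorem mainTheorem2:
  fixes s d :: nat and A :: "real mat" and b :: "real vec"
    and U V D J :: "real mat" and h :: real and r :: "real vec"
  assumes s_pos: "s \<ge> 1"
    and A_dim: "A \<in> carrier_mat s s" and b_dim: "b \<in> carrier_vec s"
    and b_pos: "\<forall>i<s. b $ i > 0"
    and sympl: "\<forall>i<s. \<forall>j<s. b $ i * A $$ (i,j) + b $ j * A $$ (j,i) - b $ i * b $ j = 0"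
    and symm_b: "\<forall>i<s. b $ (s - 1 - i) = b $ i"
    and symm_A: "\<forall>i<s. \<forall>j<s. b $ j = A $$ (s - 1 - i, s - 1 - j) + A $$ (i,j)"
  defines "m \<equiv> (s + 1) div 2"
  defines "Bm \<equiv> diagm s (\<lambda>i. b $ i)"
    and "Bh \<equiv> diagm s (\<lambda>i. sqrt (b $ i))"
    and "Bmh \<equiv> diagm s (\<lambda>i. 1 / sqrt (b $ i))"
    and "e \<equiv> vec s (\<lambda>_. 1 :: real)"
    and "Abar \<equiv> mat s s (\<lambda>(i,j). A $$ (i,j) - b $ j / 2)"
    and "P1 \<equiv> P1_mat s" and "P2 \<equiv> P2_mat s"
  defines "K \<equiv> transpose_mat P1 * Bh * Abar * Bmh * P2"
  assumes U_orth: "U \<in> carrier_mat m m" "transpose_mat U * U = 1\<^sub>m m"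
    and V_orth: "V \<in> carrier_mat (s - m) (s - m)" "transpose_mat V * V = 1\<^sub>m (s - m)"
    and D_dim: "D \<in> carrier_mat m (s - m)"
    and D_diag: "\<forall>i<m. \<forall>j<s - m. i \<noteq> j \<longrightarrow> D $$ (i,j) = 0"
    and D_nonneg: "\<forall>i<s - m. D $$ (i,i) \<ge> 0"
    and svd: "K = U * D * transpose_mat V"
  defines "\<sigma> \<equiv> (\<lambda>i. if i < s - m then D $$ (i,i) else 0)"
    and "Q1 \<equiv> Bmh * P1 * U" and "Q2 \<equiv> Bmh * P2 * V"
  defines "\<alpha> \<equiv> transpose_mat Q1 *\<^sub>v (Bm *\<^sub>v e)"
  assumes J_dim: "J \<in> carrier_mat d d" and r_dim: "r \<in> carrier_vec (s * d)"
  defines "N \<equiv> (\<lambda>i. 1\<^sub>m d + (h\<^sup>2 * (\<sigma> i)\<^sup>2) \<cdot>\<^sub>m (J * J))"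
  assumes N_inv: "\<forall>i<m. invertible_mat (N i)"
  defines "M \<equiv> 1\<^sub>m d - J * ((h / 2) \<cdot>\<^sub>m msum d d (\<lambda>i. ((\<alpha> $ i)\<^sup>2) \<cdot>\<^sub>m minv (N i)) {..<m})"
  assumes M_inv: "invertible_mat M"
  defines "R \<equiv> kron (transpose_mat Q1 * Bm) (1\<^sub>m d) *\<^sub>v r
               + h \<cdot>\<^sub>v (kron (D * transpose_mat Q2 * Bm) J *\<^sub>v r)"
  defines "Rb \<equiv> block_vec d R"
  defines "\<Delta>z \<equiv> minv M *\<^sub>v (h \<cdot>\<^sub>v (J *\<^sub>v vsum d (\<lambda>i. \<alpha> $ i \<cdot>\<^sub>v (minv (N i) *\<^sub>v Rb i)) {..<m}))"
  defines "W \<equiv> (\<lambda>i. minv (N i) *\<^sub>v (Rb i + (\<alpha> $ i / 2) \<cdot>\<^sub>v \<Delta>z))"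
  defines "W' \<equiv> stack_vec m d W"
  defines "W'' \<equiv> (- h) \<cdot>\<^sub>v (kron (transpose_mat D) J *\<^sub>v W')
                 + kron (transpose_mat Q2 * Bm) (1\<^sub>m d) *\<^sub>v r"
  defines "\<Delta>Y \<equiv> kron Q1 (1\<^sub>m d) *\<^sub>v W' + kron Q2 (1\<^sub>m d) *\<^sub>v W''"
  shows "\<Delta>Y \<in> carrier_vec (s * d)
       \<and> (kron (1\<^sub>m s) (1\<^sub>m d) - h \<cdot>\<^sub>m kron A J) *\<^sub>v \<Delta>Y = r
       \<and> (\<forall>x \<in> carrier_vec (s * d). (kron (1\<^sub>m s) (1\<^sub>m d) - h \<cdot>\<^sub>m kron A J) *\<^sub>v x = r \<longrightarrow> x = \<Delta>Y)"
proof -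
  interpret rk: symmetric_symplectic_rk_svd s A b U V D
    by unfold_locales
      (fact A_dim b_dim b_pos sympl symm_b symm_A U_orth[unfolded m_def] V_orth[unfolded m_def]
        D_dim[unfolded m_def] svd[unfolded K_def P1_def P2_def Bh_def Bmh_def Abar_def])+
  have Q: "Q1 = rk.Q1" "Q2 = rk.Q2" and \<alpha>: "\<alpha> = rk.alpha"
    by (simp_all add: Q1_def Q2_def \<alpha>_def rk.Q1_def rk.Q2_def rk.alpha_def Bmh_def P1_def P2_def Bm_def e_def)
  have N: "N = rk.N_mat d J h"
    by (simp add: N_def rk.N_mat_def \<sigma>_def rk.sigma_def m_def fun_eq_iff)
  have M: "M = rk.M_mat d J h"
    by (simp add: M_def rk.M_mat_def N \<alpha> m_def)
  have \<Delta>Y: "\<Delta>Y = rk.newton_increment d J h r"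
    unfolding \<Delta>Y_def W''_def W'_def W_def \<Delta>z_def Rb_def R_def rk.newton_increment_def rk.newton_blocks_def
      rk.newton_rhs_def Let_def Q \<alpha> N M
    by (simp add: m_def Bm_def)
  let ?T = "kron (1\<^sub>m s) (1\<^sub>m d) - h \<cdot>\<^sub>m kron A J"
  have solves: "rk.newton_increment d J h y \<in> carrier_vec (s * d) \<and> ?T *\<^sub>v rk.newton_increment d J h y = y"
    if "y \<in> carrier_vec (s * d)" for y
    using rk.newton_increment_solves[OF D_diag[unfolded m_def] J_dim that] N_inv M_inv by (simp add: N M m_def)
  have "?T \<in> carrier_mat (s * d) (s * d)"
    using A_dim J_dim by (auto simp: kron_def)
  then show ?thesis
    using solves[OF r_dim] square_mat_surj_imp_inj[of ?T "s * d"] solves unfolding \<Delta>Y by metis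
qed

end
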